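(* Let $n\geq 6$ be an integer, $K$ a field, $R=K[x_1,\dots,x_n]$, and let $I_n$ be the ideal of $R$ generated by the monomials $x_1x_3,\dots,x_1x_{n-1}$; $x_2x_4,\dots,x_2x_n$; $x_3x_5,\dots,x_3x_n$; $x_4x_n,\dots,x_{n-2}x_n$. Let $B=(b_{ij})_{i,j=1,\dots,n-3}$ be the matrix defined by: $b_{jj}=x_1$ for $j=1,\dots,n-4$ and $b_{n-3,n-3}=x_3$; $b_{j+1,j}=x_2$ for $j=1,\dots,n-4$; $b_{ij}=0$ if $i\geq j+2$; $b_{j-1,j}=x_3x_{3+j}$ for $j=2,\dots,n-4$; $b_{1,n-3}=x_2$ and $b_{i,n-3}=x_{2+i}$ for $i=2,\dots,n-4$; $b_{ij}=0$ if $j\geq i+2$ and $j\neq n-3$. Let $D=\det B-(-1)^n x_2^{n-3}$. Then: (a) $D\in I_n$; (b) $D-x_1^{n-4}x_3\in x_2\,(x_4,\dots,x_n)$, where $(x_4,\dots,x_n)$ is the ideal of $R$ generated by $x_4,\dots,x_n$. *)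

theory Defs
  imports "HOL-Library.Poly_Mapping" "Jordan_Normal_Form.Determinant"
begin

type_synonym 'a mpoly = "(nat \<Rightarrow>\<^sub>0 nat) \<Rightarrow>\<^sub>0 'a"

definition var :: "nat \<Rightarrow> 'a::comm_ring_1 mpoly" where
  "var i = Poly_Mapping.single (Poly_Mapping.single i 1) 1"

definition ideal_gen :: "'a::comm_ring_1 set \<Rightarrow> 'a set" where
  "ideal_gen S = {y. \<exists>T f. finite T \<and> T \<subseteq> S \<and> y = (\<Sum>s\<in>T. f s * s)}"

definition I_gens :: "nat \<Rightarrow> 'a::comm_ring_1 mpoly set" where
  "I_gens n = {var 1 * var j | j. 3 \<le> j \<and> j \<le> n - 1}
            \<union> {var 2 * var j | j. 4 \<le> j \<and> j \<le> n}
            \<union> {var 3 * var j | j. 5 \<le> j \<and> j \<le> n}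
            \<union> {var i * var n | i. 4 \<le> i \<and> i \<le> n - 2}"

text \<open>Entries b_{ij} of B, 1-based indices i, j in {1..n-3}.\<close>
definition bB :: "nat \<Rightarrow> nat \<Rightarrow> nat \<Rightarrow> 'a::comm_ring_1 mpoly" where
  "bB n i j =
    (if i = j then (if j \<le> n - 4 then var 1 else var 3)
     else if i = j + 1 then var 2
     else if i \<ge> j + 2 then 0
     else if j = n - 3 then (if i = 1 then var 2 else var (2 + i))
     else if i + 1 = j then var 3 * var (3 + j)
     else 0)"

definition matB :: "nat \<Rightarrow> 'a::comm_ring_1 mpoly mat" where
  "matB n = mat (n - 3) (n - 3) (\<lambda>(i, j). bB n (i + 1) (j + 1))"

end

theory Submission imports Defs begin

(* B is the tridiagonal matrix with diagonal x1, subdiagonal x2 and superdiagonal entries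
   x3 x_(i+4) at (i, i+1), except that its last column is (x2, x4, ..., x_(n-2), x3).
   Expanding along the last row gives det B = x3 T - x2 H, where T is the leading tridiagonal
   minor of size n-4 and H the bordered matrix of the same size. Modulo P = (x4, ..., xn) the
   superdiagonal and the inner entries of the last column vanish, so the continuant recurrence
   gives T = x1^(n-4) mod x2 P, and H = (-x2)^(n-5) x2 mod P. Hence
   D = x1^(n-4) x3 + x2 q with q in P, which is (b), and (a) follows because x1 x3 and
   x2 x4, ..., x2 xn are generators of I_n. *)

context
begin

(* Kept local: the simp rules of this interpretation make algebra_simps loop. *)

interpretation ring_self_module: Modules.module "(*) :: 'a::comm_ring_1 \<Rightarrow> 'a \<Rightarrow> 'a"
  by unfold_locales (simp_all add: algebra_simps)

lemma ideal_gen_eq_span: "ideal_gen S = ring_self_module.span S"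
  unfolding ideal_gen_def ring_self_module.span_explicit by blast

lemma ideal_gen_zero: "0 \<in> ideal_gen S"
  unfolding ideal_gen_eq_span by (rule ring_self_module.span_zero)

lemma ideal_gen_base: "s \<in> S \<Longrightarrow> s \<in> ideal_gen S"
  unfolding ideal_gen_eq_span by (rule ring_self_module.span_base)

lemma ideal_gen_add: "x \<in> ideal_gen S \<Longrightarrow> y \<in> ideal_gen S \<Longrightarrow> x + y \<in> ideal_gen S"
  unfolding ideal_gen_eq_span by (rule ring_self_module.span_add)

lemma ideal_gen_diff: "x \<in> ideal_gen S \<Longrightarrow> y \<in> ideal_gen S \<Longrightarrow> x - y \<in> ideal_gen S"
  unfolding ideal_gen_eq_span by (rule ring_self_module.span_diff)

lemma ideal_gen_mult_left: "x \<in> ideal_gen S \<Longrightarrow> r * x \<in> ideal_gen S"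
  unfolding ideal_gen_eq_span by (rule ring_self_module.span_scale)

lemma ideal_gen_mult_right: "x \<in> ideal_gen S \<Longrightarrow> x * r \<in> ideal_gen S"
  using ideal_gen_mult_left[of x S r] by (simp add: mult.commute)

lemma mult_mem_ideal_gen_from_generators:
  assumes "y \<in> ideal_gen S" and "\<And>s. s \<in> S \<Longrightarrow> g * s \<in> ideal_gen T"
  shows "g * y \<in> ideal_gen T"
proof -
  have closed: "ring_self_module.subspace {x. g * x \<in> ideal_gen T}"
    unfolding ring_self_module.subspace_def ideal_gen_eq_span
    by (auto simp: distrib_left intro: ring_self_module.span_zero ring_self_module.span_add)
      (metis mult.assoc mult.left_commute ring_self_module.span_scale)
  have "y \<in> {x. g * x \<in> ideal_gen T}"
    using assms(1)[unfolded ideal_gen_eq_span] closed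
    by (rule ring_self_module.span_subspace_induct) (simp add: assms(2))
  then show ?thesis by simp
qed

end

definition tridiag_mat :: "nat \<Rightarrow> 'a \<Rightarrow> 'a \<Rightarrow> (nat \<Rightarrow> 'a) \<Rightarrow> 'a::comm_ring_1 mat" where
  "tridiag_mat k d s e = mat k k (\<lambda>(i, j).
     if i = j then d else if i = j + 1 then s else if j = i + 1 then e i else 0)"

definition bordered_tridiag_mat ::
    "nat \<Rightarrow> 'a \<Rightarrow> 'a \<Rightarrow> (nat \<Rightarrow> 'a) \<Rightarrow> (nat \<Rightarrow> 'a) \<Rightarrow> 'a::comm_ring_1 mat" where
  "bordered_tridiag_mat k d s e c = mat k k (\<lambda>(i, j).
     if j = k - 1 then c i else if i = j then d else if i = j + 1 then s else if j = i + 1 then e i else 0)"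

lemma det_bordered_tridiag_mat_Suc_0: "det (bordered_tridiag_mat (Suc 0) d s e c) = c 0"
proof -
  have A: "bordered_tridiag_mat (Suc 0) d s e c \<in> carrier_mat (Suc 0) (Suc 0)"
    by (simp add: bordered_tridiag_mat_def)
  show ?thesis
    by (subst laplace_expansion_row[OF A, of 0])
      (auto simp: cofactor_def bordered_tridiag_mat_def mat_delete_def)
qed

lemma det_tridiag_mat_Suc_0: "det (tridiag_mat (Suc 0) d s e) = d"
proof -
  have "tridiag_mat (Suc 0) d s e = bordered_tridiag_mat (Suc 0) d s e (\<lambda>_. d)"
    by (rule eq_matI) (auto simp: tridiag_mat_def bordered_tridiag_mat_def)
  then show ?thesis by (simp only: det_bordered_tridiag_mat_Suc_0)
qed

lemma det_bordered_tridiag_mat_Suc_Suc: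
  "det (bordered_tridiag_mat (Suc (Suc k)) d s e c) =
     c (Suc k) * det (tridiag_mat (Suc k) d s e) - s * det (bordered_tridiag_mat (Suc k) d s e c)"
proof -
  let ?A = "bordered_tridiag_mat (Suc (Suc k)) d s e c"
  have A: "?A \<in> carrier_mat (Suc (Suc k)) (Suc (Suc k))"
    by (simp add: bordered_tridiag_mat_def)
  have "det ?A = (\<Sum>j<Suc (Suc k). ?A $$ (Suc k, j) * cofactor ?A (Suc k) j)"
    by (rule laplace_expansion_row[OF A]) simp
  also have "\<dots> = - s * det (mat_delete ?A (Suc k) k)
      + c (Suc k) * det (mat_delete ?A (Suc k) (Suc k))"
    by (simp add: bordered_tridiag_mat_def cofactor_def)
  also have "mat_delete ?A (Suc k) (Suc k) = tridiag_mat (Suc k) d s e"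
    by (rule eq_matI) (auto simp: mat_delete_def bordered_tridiag_mat_def tridiag_mat_def)
  also have "mat_delete ?A (Suc k) k = bordered_tridiag_mat (Suc k) d s e c"
    by (rule eq_matI) (auto simp: mat_delete_def bordered_tridiag_mat_def)
  finally show ?thesis by simp
qed

lemma det_bordered_tridiag_mat_last_col_unit:
  "det (bordered_tridiag_mat (Suc k) d s e (\<lambda>i. if i = k then a else 0)) = a * det (tridiag_mat k d s e)"
proof -
  let ?A = "bordered_tridiag_mat (Suc k) d s e (\<lambda>i. if i = k then a else 0)"
  have A: "?A \<in> carrier_mat (Suc k) (Suc k)"
    by (simp add: bordered_tridiag_mat_def)
  have "det ?A = (\<Sum>i<Suc k. ?A $$ (i, k) * cofactor ?A i k)"
    by (rule laplace_expansion_column[OF A]) simp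
  also have "\<dots> = a * det (mat_delete ?A k k)"
    by (simp add: bordered_tridiag_mat_def cofactor_def)
  also have "mat_delete ?A k k = tridiag_mat k d s e"
    by (rule eq_matI) (auto simp: mat_delete_def bordered_tridiag_mat_def tridiag_mat_def)
  finally show ?thesis .
qed

lemma det_tridiag_mat_Suc_Suc:
  "det (tridiag_mat (Suc (Suc k)) d s e) =
     d * det (tridiag_mat (Suc k) d s e) - s * e k * det (tridiag_mat k d s e)"
proof -
  have "tridiag_mat (Suc (Suc k)) d s e =
      bordered_tridiag_mat (Suc (Suc k)) d s e (\<lambda>i. if i = Suc k then d else if i = k then e k else 0)"
    by (rule eq_matI) (auto simp: tridiag_mat_def bordered_tridiag_mat_def)
  moreover have "bordered_tridiag_mat (Suc k) d s e (\<lambda>i. if i = Suc k then d else if i = k then e k else 0)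
      = bordered_tridiag_mat (Suc k) d s e (\<lambda>i. if i = k then e k else 0)"
    by (rule eq_matI) (auto simp: bordered_tridiag_mat_def)
  ultimately show ?thesis
    by (simp add: det_bordered_tridiag_mat_Suc_Suc det_bordered_tridiag_mat_last_col_unit)
qed

lemma det_tridiag_mat_mod_ideal:
  assumes "\<And>j. j < k \<Longrightarrow> e j \<in> ideal_gen S"
  shows "\<exists>p \<in> ideal_gen S. det (tridiag_mat k d s e) = d ^ k + s * p"
  using assms
proof (induction k rule: induct_nat_012)
  case 0
  have "det (tridiag_mat 0 d s e) = d ^ 0 + s * 0"
    by (simp add: tridiag_mat_def)
  then show ?case using ideal_gen_zero by blast
next
  case 1
  have "det (tridiag_mat (Suc 0) d s e) = d ^ Suc 0 + s * 0"
    by (simp add: det_tridiag_mat_Suc_0)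
  then show ?case using ideal_gen_zero by blast
next
  case (ge2 k)
  have "\<exists>p \<in> ideal_gen S. det (tridiag_mat (Suc k) d s e) = d ^ Suc k + s * p"
    by (rule ge2.IH(2)) (simp add: ge2.prems)
  then obtain p where p: "p \<in> ideal_gen S" "det (tridiag_mat (Suc k) d s e) = d ^ Suc k + s * p"
    by blast
  have "d * p - e k * det (tridiag_mat k d s e) \<in> ideal_gen S"
    by (intro ideal_gen_diff ideal_gen_mult_left[OF p(1)] ideal_gen_mult_right ge2.prems) simp
  moreover have "det (tridiag_mat (Suc (Suc k)) d s e) =
      d ^ Suc (Suc k) + s * (d * p - e k * det (tridiag_mat k d s e))"
    by (simp add: det_tridiag_mat_Suc_Suc p(2) algebra_simps)
  ultimately show ?case by blast
qed

lemma det_bordered_tridiag_mat_mod_ideal: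
  assumes "0 < k" and "\<And>i. 0 < i \<Longrightarrow> i < k \<Longrightarrow> c i \<in> ideal_gen S"
  shows "det (bordered_tridiag_mat k d s e c) - (- s) ^ (k - 1) * c 0 \<in> ideal_gen S"
  using assms
proof (induction k rule: nat_induct_non_zero)
  case 1
  show ?case by (simp add: det_bordered_tridiag_mat_Suc_0 ideal_gen_zero)
next
  case (Suc k)
  then obtain m where m: "k = Suc m" by (cases k) auto
  have IH: "det (bordered_tridiag_mat k d s e c) - (- s) ^ (k - 1) * c 0 \<in> ideal_gen S"
    using Suc by simp
  have "det (bordered_tridiag_mat (Suc k) d s e c) - (- s) ^ k * c 0 =
      c k * det (tridiag_mat k d s e) - s * (det (bordered_tridiag_mat k d s e c) - (- s) ^ (k - 1) * c 0)"
    by (simp add: m det_bordered_tridiag_mat_Suc_Suc algebra_simps)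
  moreover have "c k \<in> ideal_gen S"
    using Suc.prems m by simp
  ultimately show ?case
    using IH by (simp add: ideal_gen_diff ideal_gen_mult_left ideal_gen_mult_right)
qed

definition matB_superdiag :: "nat \<Rightarrow> 'a::comm_ring_1 mpoly" where
  "matB_superdiag j = var 3 * var (j + 5)"

definition matB_last_col :: "nat \<Rightarrow> nat \<Rightarrow> 'a::comm_ring_1 mpoly" where
  "matB_last_col n i = (if i = 0 then var 2 else if i = n - 4 then var 3 else var (i + 3))"

lemma matB_eq_bordered_tridiag_mat:
  assumes "6 \<le> n"
  shows "matB n = bordered_tridiag_mat (n - 3) (var 1) (var 2) matB_superdiag (matB_last_col n)"
  using assms
  by (intro eq_matI) (auto simp: matB_def bordered_tridiag_mat_def bB_def matB_superdiag_def
      matB_last_col_def add.commute intro!: arg_cong[where f = var])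

lemma var_mem_ideal_gen_vars: "4 \<le> j \<Longrightarrow> j \<le> n \<Longrightarrow> var j \<in> ideal_gen {var j | j. 4 \<le> j \<and> j \<le> n}"
  by (rule ideal_gen_base) auto

lemma var_2_mult_mem_ideal_gen_I_gens:
  assumes "q \<in> ideal_gen {var j | j. 4 \<le> j \<and> j \<le> n}"
  shows "var 2 * q \<in> ideal_gen (I_gens n)"
  using assms by (rule mult_mem_ideal_gen_from_generators) (auto simp: I_gens_def intro!: ideal_gen_base)

lemma det_matB_eq:
  assumes "6 \<le> n"
  shows "det (matB n) = var 3 * det (tridiag_mat (n - 4) (var 1) (var 2) matB_superdiag)
    - var 2 * det (bordered_tridiag_mat (n - 4) (var 1) (var 2) matB_superdiag (matB_last_col n))"
proof -
  have n3: "n - 3 = Suc (Suc (n - 5))" and n4: "Suc (n - 5) = n - 4"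
    using assms by auto
  show ?thesis
    unfolding matB_eq_bordered_tridiag_mat[OF assms] n3 det_bordered_tridiag_mat_Suc_Suc
    unfolding n4 using assms by (simp add: matB_last_col_def)
qed

lemma det_matB_decomposition:
  assumes "6 \<le> n"
  shows "\<exists>q \<in> ideal_gen {var j | j. 4 \<le> j \<and> j \<le> n}.
    det (matB n :: 'a::comm_ring_1 mpoly mat) - (-1) ^ n * var 2 ^ (n - 3) =
      var 1 ^ (n - 4) * var 3 + var 2 * q"
proof -
  let ?P = "ideal_gen {var j | j. 4 \<le> j \<and> j \<le> n} :: 'a mpoly set"
  let ?T = "det (tridiag_mat (n - 4) (var 1) (var 2) matB_superdiag) :: 'a mpoly"
  let ?H = "det (bordered_tridiag_mat (n - 4) (var 1) (var 2) matB_superdiag (matB_last_col n)) :: 'a mpoly"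
  obtain m where m: "n = m + 6"
    using assms le_Suc_ex by (metis add.commute)
  have "\<exists>p \<in> ?P. ?T = var 1 ^ (n - 4) + var 2 * p"
    by (rule det_tridiag_mat_mod_ideal)
      (auto simp: matB_superdiag_def m intro!: ideal_gen_mult_left var_mem_ideal_gen_vars)
  then obtain p where p: "p \<in> ?P" "?T = var 1 ^ (n - 4) + var 2 * p"
    by blast
  have "?H - (- var 2) ^ (n - 4 - 1) * matB_last_col n 0 \<in> ?P"
    by (rule det_bordered_tridiag_mat_mod_ideal)
      (auto simp: matB_last_col_def m intro!: var_mem_ideal_gen_vars)
  then have H: "?H - (- var 2) ^ (n - 5) * var 2 \<in> ?P"
    by (simp add: matB_last_col_def diff_diff_add)
  have "det (matB n) - (-1) ^ n * var 2 ^ (n - 3) =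
      var 1 ^ (n - 4) * var 3 + var 2 * (var 3 * p - (?H - (- var 2) ^ (n - 5) * var 2))"
    unfolding det_matB_eq[OF assms] p(2) power_minus[of "var 2"]
    by (simp add: m algebra_simps power_add power3_eq_cube)
  moreover have "var 3 * p - (?H - (- var 2) ^ (n - 5) * var 2) \<in> ?P"
    by (rule ideal_gen_diff[OF ideal_gen_mult_left[OF p(1)] H])
  ultimately show ?thesis by blast
qed

lemma var_1_pow_mult_var_3_mem_ideal_gen_I_gens:
  assumes "0 < k" and "4 \<le> n"
  shows "var 1 ^ k * var 3 \<in> ideal_gen (I_gens n)"
proof -
  have "var 1 * var 3 \<in> I_gens n"
    using assms(2) by (auto simp: I_gens_def)
  moreover have "var 1 ^ k * var 3 = var 1 ^ (k - 1) * (var 1 * var 3)"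
    using assms(1) by (simp add: mult_ac power_eq_if)
  ultimately show ?thesis
    by (metis ideal_gen_base ideal_gen_mult_left)
qed

theorem lemma2p1:
  fixes n :: nat
  assumes "n \<ge> 6"
  defines "D \<equiv> det (matB n :: 'a::field mpoly mat) - (-1) ^ n * var 2 ^ (n - 3)"
  shows "D \<in> ideal_gen (I_gens n) \<and>
         D - var 1 ^ (n - 4) * var 3 \<in> {var 2 * r | r. r \<in> ideal_gen {var j | j. 4 \<le> j \<and> j \<le> n}}"
proof -
  obtain q where q: "q \<in> ideal_gen {var j | j. 4 \<le> j \<and> j \<le> n}"
    and D: "D = var 1 ^ (n - 4) * var 3 + var 2 * q"
    using det_matB_decomposition[OF assms(1)] unfolding D_def by blast
  have "D \<in> ideal_gen (I_gens n)"
    unfolding D using assms q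
    by (intro ideal_gen_add var_1_pow_mult_var_3_mem_ideal_gen_I_gens var_2_mult_mem_ideal_gen_I_gens) auto
  moreover have "D - var 1 ^ (n - 4) * var 3 = var 2 * q"
    unfolding D by simp
  ultimately show ?thesis
    using q by blast
qed

end
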